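(* Let $r\ge2$, $e\ge1$ and $p'$ be integers with $0\le p'\le\frac{(r+1)e}{2}$. Then there exists an integer $p$ with $0\le p\le\frac{re}{2}$ such that the polynomial $$\Bigl\{\Omega^{2p'}\,(\underline{x}\,\underline{y})^{2p}\,a_{\underline{x}}^{re-2p}\,a_{\underline{y}}^{re-2p}\,b_{\underline{x}}^{e}\,b_{\underline{y}}^{e}\Bigr\}\Big|_{\underline{y}:=\underline{x}}$$ in the variables $a_0,a_1,b_0,b_1,x_0,x_1$ is not identically zero.
   Context: $\underline{x}=(x_0,x_1)$, $\underline{y}=(y_0,y_1)$, $a=(a_0,a_1)$, $b=(b_0,b_1)$ are pairs of indeterminates; $a_{\underline{x}}=a_0x_0+a_1x_1$, $a_{\underline{y}}=a_0y_0+a_1y_1$, similarly for $b$; $(\underline{x}\,\underline{y})=x_0y_1-x_1y_0$; $\Omega=\frac{\partial^2}{\partial x_0\partial y_1}-\frac{\partial^2}{\partial x_1\partial y_0}$; and $|_{\underline{y}:=\underline{x}}$ means substituting $y_i=x_i$ after differentiation. *)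

theory Defs
  imports "HOL-Analysis.Analysis"
begin

text \<open>Polynomials are represented
  by the real polynomial functions they induce (over a field of characteristic 0 a
  polynomial is zero iff its function is zero).\<close>
datatype var = A0 | A1 | B0 | B1 | X0 | X1 | Y0 | Y1

type_synonym pfun = "(var \<Rightarrow> real) \<Rightarrow> real"

definition pd :: "var \<Rightarrow> pfun \<Rightarrow> pfun" where
  "pd v f = (\<lambda>q. deriv (\<lambda>t. f (q(v := t))) (q v))"

definition Omega :: "pfun \<Rightarrow> pfun" where
  "Omega f = (\<lambda>q. pd X0 (pd Y1 f) q - pd X1 (pd Y0 f) q)"

definition bracket_xy :: pfun where
  "bracket_xy = (\<lambda>q. q X0 * q Y1 - q X1 * q Y0)"

definition a_x :: pfun where "a_x = (\<lambda>q. q A0 * q X0 + q A1 * q X1)"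
definition a_y :: pfun where "a_y = (\<lambda>q. q A0 * q Y0 + q A1 * q Y1)"
definition b_x :: pfun where "b_x = (\<lambda>q. q B0 * q X0 + q B1 * q X1)"
definition b_y :: pfun where "b_y = (\<lambda>q. q B0 * q Y0 + q B1 * q Y1)"

text \<open>(xy)^(2p) a_x^(re-2p) a_y^(re-2p) b_x^e b_y^e (used only when 2p \<le> re)\<close>
definition Fpoly :: "nat \<Rightarrow> nat \<Rightarrow> nat \<Rightarrow> pfun" where
  "Fpoly r e p = (\<lambda>q. bracket_xy q ^ (2*p) * a_x q ^ (r*e - 2*p) * a_y q ^ (r*e - 2*p)
                      * b_x q ^ e * b_y q ^ e)"

end

theory Submission
  imports Defs
begin

text \<open>
  On the diagonal \<open>y = x\<close> the bracket \<open>(xy)\<close> vanishes, and for \<open>X\<close> homogeneous of degree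
  \<open>D\<close> in \<open>(x, y)\<close> one has \<open>\<Omega>((xy)^(b+1) X) = (b+1)(b+2+D) (xy)^b X + (xy)^(b+1) \<Omega>X\<close>.
  Since \<open>\<Omega>\<close> lowers the degree by 2, induction shows that on the diagonal
  \<open>\<Omega>^a ((xy)^b X)\<close> is a positive multiple of \<open>\<Omega>^(a-b) X\<close> whenever \<open>b \<le> a\<close> and
  \<open>2(a-b) \<le> D\<close>. With \<open>m = re - 2p\<close> the polynomial of the theorem is therefore, on the
  diagonal, a positive multiple of \<open>\<Omega>^(2(p'-p)) (a\<^sub>x^m a\<^sub>y^m b\<^sub>x^e b\<^sub>y^e)\<close>.
  If \<open>2p' \<le> re\<close> take \<open>p = p'\<close>, and no derivative is left.
  Otherwise take \<open>p = p' - e\<close>, so that \<open>m \<ge> e\<close> because \<open>r \<ge> 2\<close>, and specialise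
  \<open>a = (1,0)\<close>, \<open>b = (0,1)\<close>: then \<open>\<Omega>^(2e)\<close> acts on \<open>x\<^sub>0^m x\<^sub>1^e y\<^sub>0^m y\<^sub>1^e\<close>, and in the
  binomial expansion of \<open>\<Omega> = \<partial>x\<^sub>0\<partial>y\<^sub>1 - \<partial>x\<^sub>1\<partial>y\<^sub>0\<close> (a difference of commuting
  operators) only the middle term survives.
\<close>

section \<open>Partial derivatives of polynomial functions\<close>

inductive_set polyfun :: "pfun set" where
  polyfun_const: "(\<lambda>q. c) \<in> polyfun"
| polyfun_var: "(\<lambda>q. q v) \<in> polyfun"
| polyfun_add: "f \<in> polyfun \<Longrightarrow> g \<in> polyfun \<Longrightarrow> (\<lambda>q. f q + g q) \<in> polyfun"
| polyfun_mult: "f \<in> polyfun \<Longrightarrow> g \<in> polyfun \<Longrightarrow> (\<lambda>q. f q * g q) \<in> polyfun"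

lemma polyfun_cmult: "f \<in> polyfun \<Longrightarrow> (\<lambda>q. c * f q) \<in> polyfun"
  by (rule polyfun_mult[OF polyfun_const])

lemma polyfun_diff: "f \<in> polyfun \<Longrightarrow> g \<in> polyfun \<Longrightarrow> (\<lambda>q. f q - g q) \<in> polyfun"
  using polyfun_add[OF _ polyfun_cmult[of g "-1"]] by simp

lemma polyfun_power: "f \<in> polyfun \<Longrightarrow> (\<lambda>q. f q ^ n) \<in> polyfun"
  by (induction n) (auto intro: polyfun_const polyfun_mult)

lemmas polyfun_intros [simp] = polyfun.intros polyfun_cmult polyfun_diff polyfun_power

lemma polyfun_differentiable:
  "f \<in> polyfun \<Longrightarrow> (\<lambda>t. f (q(v := t))) differentiable (at x)"
proof (induction rule: polyfun.induct)
  case (polyfun_var w)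
  then show ?case by (cases "v = w") auto
qed auto

lemma has_real_derivative_pd:
  "f \<in> polyfun \<Longrightarrow> ((\<lambda>t. f (q(v := t))) has_real_derivative pd v f q) (at (q v))"
  unfolding pd_def by (simp add: DERIV_deriv_iff_real_differentiable polyfun_differentiable)

lemma pd_eqI: "((\<lambda>t. f (q(v := t))) has_real_derivative D) (at (q v)) \<Longrightarrow> pd v f q = D"
  unfolding pd_def by (rule DERIV_imp_deriv)

lemma pd_const [simp]: "pd v (\<lambda>q. c) = (\<lambda>q. 0)"
  by (intro ext pd_eqI) simp

lemma pd_var [simp]: "pd v (\<lambda>q. q w) = (\<lambda>q. if v = w then 1 else 0)"
  by (intro ext pd_eqI) (auto simp: DERIV_ident)

lemma pd_add:
  "f \<in> polyfun \<Longrightarrow> g \<in> polyfun \<Longrightarrow> pd v (\<lambda>q. f q + g q) = (\<lambda>q. pd v f q + pd v g q)"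
  by (intro ext pd_eqI DERIV_add has_real_derivative_pd)

lemma pd_diff:
  "f \<in> polyfun \<Longrightarrow> g \<in> polyfun \<Longrightarrow> pd v (\<lambda>q. f q - g q) = (\<lambda>q. pd v f q - pd v g q)"
  by (intro ext pd_eqI DERIV_diff has_real_derivative_pd)

lemma pd_cmult: "f \<in> polyfun \<Longrightarrow> pd v (\<lambda>q. c * f q) = (\<lambda>q. c * pd v f q)"
  by (intro ext pd_eqI DERIV_cmult has_real_derivative_pd)

lemma pd_minus [simp]: "f \<in> polyfun \<Longrightarrow> pd v (\<lambda>q. - f q) = (\<lambda>q. - pd v f q)"
  by (intro ext pd_eqI DERIV_minus has_real_derivative_pd)

lemma pd_mult:
  assumes "f \<in> polyfun" "g \<in> polyfun"
  shows "pd v (\<lambda>q. f q * g q) = (\<lambda>q. f q * pd v g q + pd v f q * g q)"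
proof (intro ext pd_eqI)
  fix q
  show "((\<lambda>t. f (q(v := t)) * g (q(v := t))) has_real_derivative f q * pd v g q + pd v f q * g q) (at (q v))"
    using DERIV_mult'[OF has_real_derivative_pd[OF assms(1), of q v] has_real_derivative_pd[OF assms(2), of q v]]
    by simp
qed

lemma pd_sum:
  "(\<And>i. i \<in> A \<Longrightarrow> f i \<in> polyfun) \<Longrightarrow> pd v (\<lambda>q. \<Sum>i\<in>A. f i q) = (\<lambda>q. \<Sum>i\<in>A. pd v (f i) q)"
  by (intro ext pd_eqI DERIV_sum has_real_derivative_pd)

lemma pd_polyfun [simp]: "f \<in> polyfun \<Longrightarrow> pd v f \<in> polyfun"
  by (induction rule: polyfun.induct) (simp_all add: pd_add pd_mult)

lemma pd_commute: "f \<in> polyfun \<Longrightarrow> pd v (pd w f) = pd w (pd v f)"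
  by (induction rule: polyfun.induct) (simp_all add: pd_add pd_mult algebra_simps)

lemma Omega_polyfun [simp]: "f \<in> polyfun \<Longrightarrow> Omega f \<in> polyfun"
  unfolding Omega_def by simp

lemma Omega_power_polyfun [simp]: "f \<in> polyfun \<Longrightarrow> (Omega ^^ n) f \<in> polyfun"
  by (induction n) auto

lemma Omega_add:
  "f \<in> polyfun \<Longrightarrow> g \<in> polyfun \<Longrightarrow> Omega (\<lambda>q. f q + g q) = (\<lambda>q. Omega f q + Omega g q)"
  unfolding Omega_def by (simp add: pd_add algebra_simps)

lemma Omega_cmult: "f \<in> polyfun \<Longrightarrow> Omega (\<lambda>q. c * f q) = (\<lambda>q. c * Omega f q)"
  unfolding Omega_def by (simp add: pd_cmult algebra_simps)

lemma Omega_sum: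
  assumes "\<And>i. i \<in> A \<Longrightarrow> f i \<in> polyfun"
  shows "Omega (\<lambda>q. \<Sum>i\<in>A. c i * f i q) = (\<lambda>q. \<Sum>i\<in>A. c i * Omega (f i) q)"
  unfolding Omega_def using assms by (simp add: pd_sum pd_cmult sum_subtractf algebra_simps)

lemma Omega_power_linear:
  "f \<in> polyfun \<Longrightarrow> g \<in> polyfun \<Longrightarrow>
   (Omega ^^ n) (\<lambda>q. c * f q + g q) = (\<lambda>q. c * (Omega ^^ n) f q + (Omega ^^ n) g q)"
  by (induction n) (simp_all add: Omega_add Omega_cmult)

lemma Omega_mult:
  assumes "f \<in> polyfun" "g \<in> polyfun"
  shows "Omega (\<lambda>q. f q * g q) = (\<lambda>q. Omega f q * g q + f q * Omega g q
     + pd X0 f q * pd Y1 g q + pd Y1 f q * pd X0 g q - pd X1 f q * pd Y0 g q - pd Y0 f q * pd X1 g q)"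
  unfolding Omega_def using assms by (simp add: pd_mult pd_add algebra_simps)

lemma pd_cong_on:
  assumes "\<And>q. q \<in> S \<Longrightarrow> f q = g q" and "\<And>t. q(v := t) \<in> S"
  shows "pd v f q = pd v g q"
proof -
  have "(\<lambda>t. f (q(v := t))) = (\<lambda>t. g (q(v := t)))"
    using assms by blast
  then show ?thesis unfolding pd_def by simp
qed

lemma Omega_cong_on:
  assumes "\<And>q. q \<in> S \<Longrightarrow> f q = g q" and "\<And>q v t. q \<in> S \<Longrightarrow> v \<in> {X0, X1, Y0, Y1} \<Longrightarrow> q(v := t) \<in> S"
    and "q \<in> S"
  shows "Omega f q = Omega g q"
proof -
  have inner: "pd v f q' = pd v g q'" if "q' \<in> S" "v \<in> {Y0, Y1}" for q' v
    using pd_cong_on[of S f g, OF assms(1)] assms(2) that by blast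
  have "pd X0 (pd Y1 f) q = pd X0 (pd Y1 g) q" "pd X1 (pd Y0 f) q = pd X1 (pd Y0 g) q"
    using pd_cong_on[of S, OF inner] assms(2,3) by auto
  then show ?thesis unfolding Omega_def by simp
qed

lemma Omega_power_cong_on:
  assumes "\<And>q. q \<in> S \<Longrightarrow> f q = g q" and "\<And>q v t. q \<in> S \<Longrightarrow> v \<in> {X0, X1, Y0, Y1} \<Longrightarrow> q(v := t) \<in> S"
    and "q \<in> S"
  shows "(Omega ^^ n) f q = (Omega ^^ n) g q"
  using assms(3)
proof (induction n arbitrary: q)
  case 0
  then show ?case using assms(1) by simp
next
  case (Suc n)
  then show ?case using Omega_cong_on[OF Suc.IH assms(2)] by simp
qed

section \<open>The Euler operator in \<open>x\<close> and \<open>y\<close>\<close>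

definition euler_xy :: "pfun \<Rightarrow> pfun" where
  "euler_xy f = (\<lambda>q. q X0 * pd X0 f q + q X1 * pd X1 f q + q Y0 * pd Y0 f q + q Y1 * pd Y1 f q)"

lemma euler_xy_polyfun [simp]: "f \<in> polyfun \<Longrightarrow> euler_xy f \<in> polyfun"
  unfolding euler_xy_def by simp

lemma euler_xy_mult:
  "f \<in> polyfun \<Longrightarrow> g \<in> polyfun \<Longrightarrow>
   euler_xy (\<lambda>q. f q * g q) = (\<lambda>q. euler_xy f q * g q + f q * euler_xy g q)"
  unfolding euler_xy_def by (simp add: pd_mult algebra_simps)

lemma euler_xy_power:
  assumes "f \<in> polyfun" "euler_xy f = (\<lambda>q. D * f q)"
  shows "euler_xy (\<lambda>q. f q ^ n) = (\<lambda>q. (real n * D) * f q ^ n)"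
proof (induction n)
  case 0
  then show ?case unfolding euler_xy_def by simp
next
  case (Suc n)
  have "euler_xy (\<lambda>q. f q ^ Suc n) = (\<lambda>q. euler_xy f q * f q ^ n + f q * euler_xy (\<lambda>q. f q ^ n) q)"
    using euler_xy_mult[OF assms(1) polyfun_power[OF assms(1)]] by simp
  then show ?case using Suc assms(2) by (simp add: algebra_simps)
qed

lemma pd_euler_xy:
  "f \<in> polyfun \<Longrightarrow> v \<in> {X0, X1, Y0, Y1} \<Longrightarrow> pd v (euler_xy f) = (\<lambda>q. pd v f q + euler_xy (pd v f) q)"
  unfolding euler_xy_def by (auto simp: pd_add pd_mult pd_commute[of f v])

lemma Omega_euler_xy:
  assumes "f \<in> polyfun"
  shows "Omega (euler_xy f) = (\<lambda>q. 2 * Omega f q + euler_xy (Omega f) q)"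
proof -
  have X0_Y1: "pd X0 (pd Y1 (euler_xy f)) = (\<lambda>q. 2 * pd X0 (pd Y1 f) q + euler_xy (pd X0 (pd Y1 f)) q)"
    using assms by (simp add: pd_euler_xy pd_add)
  have X1_Y0: "pd X1 (pd Y0 (euler_xy f)) = (\<lambda>q. 2 * pd X1 (pd Y0 f) q + euler_xy (pd X1 (pd Y0 f)) q)"
    using assms by (simp add: pd_euler_xy pd_add)
  have "euler_xy (Omega f) = (\<lambda>q. euler_xy (pd X0 (pd Y1 f)) q - euler_xy (pd X1 (pd Y0 f)) q)"
    unfolding Omega_def euler_xy_def using assms by (simp add: pd_diff algebra_simps)
  then show ?thesis
    unfolding Omega_def[of "euler_xy f"] X0_Y1 X1_Y0 by (simp add: Omega_def algebra_simps)
qed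

lemma euler_xy_Omega:
  assumes "f \<in> polyfun" "euler_xy f = (\<lambda>q. D * f q)"
  shows "euler_xy (Omega f) = (\<lambda>q. (D - 2) * Omega f q)"
proof -
  have "(\<lambda>q. 2 * Omega f q + euler_xy (Omega f) q) = (\<lambda>q. D * Omega f q)"
    using Omega_euler_xy[OF assms(1)] assms by (simp add: Omega_cmult)
  then show ?thesis by (simp add: fun_eq_iff algebra_simps)
qed

section \<open>Powers of the bracket on the diagonal\<close>

lemma bracket_xy_polyfun [simp]: "bracket_xy \<in> polyfun"
  unfolding bracket_xy_def by simp

lemma pd_bracket_xy:
  "pd X0 bracket_xy = (\<lambda>q. q Y1)" "pd X1 bracket_xy = (\<lambda>q. - q Y0)"
  "pd Y0 bracket_xy = (\<lambda>q. - q X1)" "pd Y1 bracket_xy = (\<lambda>q. q X0)"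
  unfolding bracket_xy_def by (simp_all add: pd_diff pd_mult)

lemma Omega_bracket_xy: "Omega bracket_xy = (\<lambda>q. 2)"
  unfolding Omega_def by (simp add: pd_bracket_xy)

lemma euler_xy_bracket_xy: "euler_xy bracket_xy = (\<lambda>q. 2 * bracket_xy q)"
  unfolding euler_xy_def pd_bracket_xy by (simp add: bracket_xy_def algebra_simps)

lemma Omega_bracket_xy_mult:
  "f \<in> polyfun \<Longrightarrow>
   Omega (\<lambda>q. bracket_xy q * f q) = (\<lambda>q. 2 * f q + euler_xy f q + bracket_xy q * Omega f q)"
  by (simp add: Omega_mult Omega_bracket_xy pd_bracket_xy euler_xy_def algebra_simps)

lemma Omega_bracket_xy_power_mult:
  assumes f: "f \<in> polyfun"
  shows "Omega (\<lambda>q. bracket_xy q ^ Suc b * f q) = (\<lambda>q. bracket_xy q ^ b *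
           (real (Suc b) * real (Suc b + 1) * f q + real (Suc b) * euler_xy f q
            + bracket_xy q * Omega f q))"
proof (induction b)
  case 0
  show ?case using Omega_bracket_xy_mult[OF f] by (simp add: algebra_simps)
next
  case (Suc b)
  define g where "g = (\<lambda>q. bracket_xy q ^ Suc b * f q)"
  have g: "g \<in> polyfun" unfolding g_def using f by simp
  have shift: "(\<lambda>q. bracket_xy q ^ Suc (Suc b) * f q) = (\<lambda>q. bracket_xy q * g q)"
    unfolding g_def by (simp add: algebra_simps)
  have euler_g: "euler_xy g = (\<lambda>q. (real (Suc b) * 2) * bracket_xy q ^ Suc b * f q
                                  + bracket_xy q ^ Suc b * euler_xy f q)"
    unfolding g_def euler_xy_mult[OF polyfun_power[OF bracket_xy_polyfun] f]
      euler_xy_power[OF bracket_xy_polyfun euler_xy_bracket_xy] by (simp add: algebra_simps)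
  have Omega_g: "Omega g = (\<lambda>q. bracket_xy q ^ b * (real (Suc b) * real (Suc b + 1) * f q
                                + real (Suc b) * euler_xy f q + bracket_xy q * Omega f q))"
    unfolding g_def by (rule Suc.IH)
  show ?case
    unfolding shift Omega_bracket_xy_mult[OF g] euler_g Omega_g by (rule ext) (simp add: g_def algebra_simps)
qed

lemma Omega_bracket_xy_power_mult_homogeneous:
  assumes "f \<in> polyfun" "euler_xy f = (\<lambda>q. D * f q)"
  shows "Omega (\<lambda>q. bracket_xy q ^ Suc b * f q) =
           (\<lambda>q. real (Suc b) * (real (Suc b) + 1 + D) * (bracket_xy q ^ b * f q)
                + bracket_xy q ^ Suc b * Omega f q)"
  unfolding Omega_bracket_xy_power_mult[OF assms(1)] assms(2) by (rule ext) (simp add: algebra_simps)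

definition diagonal :: "(var \<Rightarrow> real) \<Rightarrow> bool" where
  "diagonal q \<longleftrightarrow> q Y0 = q X0 \<and> q Y1 = q X1"

lemma bracket_xy_diagonal: "diagonal q \<Longrightarrow> bracket_xy q = 0"
  unfolding diagonal_def bracket_xy_def by (simp add: mult.commute)

lemma Omega_power_bracket_xy_power_vanishes_on_diagonal:
  "f \<in> polyfun \<Longrightarrow> a < b \<Longrightarrow> diagonal q \<Longrightarrow> (Omega ^^ a) (\<lambda>q. bracket_xy q ^ b * f q) q = 0"
proof (induction a arbitrary: b f)
  case 0
  then show ?case by (simp add: bracket_xy_diagonal)
next
  case (Suc a)
  then obtain b' where b: "b = Suc b'" by (cases b) auto
  define g where "g = (\<lambda>q. real (Suc b') * real (Suc b' + 1) * f q + real (Suc b') * euler_xy f q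
                           + bracket_xy q * Omega f q)"
  have "(Omega ^^ Suc a) (\<lambda>q. bracket_xy q ^ b * f q) = (Omega ^^ a) (\<lambda>q. bracket_xy q ^ b' * g q)"
    unfolding b funpow_Suc_right comp_def Omega_bracket_xy_power_mult[OF Suc.prems(1)] g_def ..
  moreover have "g \<in> polyfun" unfolding g_def using Suc.prems(1) by simp
  ultimately show ?case using Suc.IH Suc.prems b by simp
qed

lemma Omega_power_Suc_bracket_xy_power_Suc:
  assumes "f \<in> polyfun" "euler_xy f = (\<lambda>q. D * f q)"
  shows "(Omega ^^ Suc a) (\<lambda>q. bracket_xy q ^ Suc b * f q) =
           (\<lambda>q. real (Suc b) * (real (Suc b) + 1 + D) * (Omega ^^ a) (\<lambda>q. bracket_xy q ^ b * f q) q
                + (Omega ^^ a) (\<lambda>q. bracket_xy q ^ Suc b * Omega f q) q)"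
  unfolding funpow_Suc_right comp_def Omega_bracket_xy_power_mult_homogeneous[OF assms]
  using assms(1) by (simp add: Omega_power_linear)

lemma Omega_power_bracket_xy_power_on_diagonal:
  "f \<in> polyfun \<Longrightarrow> euler_xy f = (\<lambda>q. D * f q) \<Longrightarrow> b \<le> a \<Longrightarrow> 2 * real (a - b) \<le> D \<Longrightarrow>
   \<exists>c>0. \<forall>q. diagonal q \<longrightarrow>
     (Omega ^^ a) (\<lambda>q. bracket_xy q ^ b * f q) q = c * (Omega ^^ (a - b)) f q"
proof (induction a arbitrary: b f D)
  case 0
  then show ?case by (intro exI[of _ 1]) simp
next
  case (Suc a)
  show ?case
  proof (cases b)
    case 0
    then show ?thesis by (intro exI[of _ 1]) simp
  next
    case (Suc b')
    note f = \<open>f \<in> polyfun\<close> and hom = \<open>euler_xy f = (\<lambda>q. D * f q)\<close>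
    define k where "k = real (Suc b') * (real (Suc b') + 1 + D)"
    have "k > 0" unfolding k_def using Suc.prems(4) by (simp add: add_pos_nonneg)
    obtain c1 where c1: "c1 > 0"
      "\<forall>q. diagonal q \<longrightarrow> (Omega ^^ a) (\<lambda>q. bracket_xy q ^ b' * f q) q = c1 * (Omega ^^ (Suc a - b)) f q"
      using Suc.IH[OF f hom, of b'] Suc.prems(3,4) \<open>b = Suc b'\<close> by auto
    have split: "(Omega ^^ Suc a) (\<lambda>q. bracket_xy q ^ b * f q) = (\<lambda>q.
        k * (Omega ^^ a) (\<lambda>q. bracket_xy q ^ b' * f q) q + (Omega ^^ a) (\<lambda>q. bracket_xy q ^ b * Omega f q) q)"
      unfolding \<open>b = Suc b'\<close> k_def by (rule Omega_power_Suc_bracket_xy_power_Suc[OF f hom])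
    show ?thesis
    proof (cases "b \<le> a")
      case True
      have "2 * real (a - b) \<le> D - 2"
        using Suc.prems(4) True \<open>b = Suc b'\<close> by (simp add: of_nat_diff)
      then obtain c2 where c2: "c2 > 0"
        "\<forall>q. diagonal q \<longrightarrow> (Omega ^^ a) (\<lambda>q. bracket_xy q ^ b * Omega f q) q = c2 * (Omega ^^ (a - b)) (Omega f) q"
        using Suc.IH[OF Omega_polyfun[OF f] euler_xy_Omega[OF f hom] True] by auto
      have "(Omega ^^ (a - b)) (Omega f) = (Omega ^^ (Suc a - b)) f"
        using True by (simp add: Suc_diff_le funpow_Suc_right del: funpow.simps)
      show ?thesis
      proof (intro exI conjI allI impI)
        show "k * c1 + c2 > 0" using \<open>k > 0\<close> c1(1) c2(1) by (intro add_pos_pos mult_pos_pos)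
        fix q assume "diagonal q"
        then show "(Omega ^^ Suc a) (\<lambda>q. bracket_xy q ^ b * f q) q = (k * c1 + c2) * (Omega ^^ (Suc a - b)) f q"
          unfolding split using c1(2) c2(2) \<open>(Omega ^^ (a - b)) (Omega f) = (Omega ^^ (Suc a - b)) f\<close>
          by (simp add: algebra_simps)
      qed
    next
      case False
      then have "\<forall>q. diagonal q \<longrightarrow> (Omega ^^ a) (\<lambda>q. bracket_xy q ^ b * Omega f q) q = 0"
        using Omega_power_bracket_xy_power_vanishes_on_diagonal[OF Omega_polyfun[OF f]] by simp
      then show ?thesis
        using split c1 \<open>k > 0\<close> by (intro exI[of _ "k * c1"]) auto
    qed
  qed
qed

section \<open>The binomial expansion of \<open>\<Omega>\<close> on a monomial\<close>

lemma pd_power_var: "pd v (\<lambda>q. q w ^ n) = (\<lambda>q. if v = w then real n * q w ^ (n - 1) else 0)"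
proof (intro ext pd_eqI)
  fix q
  show "((\<lambda>t. (q(v := t)) w ^ n) has_real_derivative (if v = w then real n * q w ^ (n - 1) else 0)) (at (q v))"
    by (cases "v = w") (simp_all add: DERIV_pow)
qed

definition xy_monomial :: "real \<Rightarrow> nat \<Rightarrow> nat \<Rightarrow> nat \<Rightarrow> nat \<Rightarrow> pfun" where
  "xy_monomial c k0 k1 l0 l1 = (\<lambda>q. c * q X0 ^ k0 * q X1 ^ k1 * q Y0 ^ l0 * q Y1 ^ l1)"

lemma xy_monomial_polyfun [simp]: "xy_monomial c k0 k1 l0 l1 \<in> polyfun"
  unfolding xy_monomial_def by simp

lemma pd_xy_monomial:
  "pd X0 (xy_monomial c k0 k1 l0 l1) = xy_monomial (c * real k0) (k0 - 1) k1 l0 l1"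
  "pd X1 (xy_monomial c k0 k1 l0 l1) = xy_monomial (c * real k1) k0 (k1 - 1) l0 l1"
  "pd Y0 (xy_monomial c k0 k1 l0 l1) = xy_monomial (c * real l0) k0 k1 (l0 - 1) l1"
  "pd Y1 (xy_monomial c k0 k1 l0 l1) = xy_monomial (c * real l1) k0 k1 l0 (l1 - 1)"
  unfolding xy_monomial_def by (simp_all add: pd_mult pd_power_var algebra_simps)

lemma Omega_xy_monomial:
  "Omega (xy_monomial c k0 k1 l0 l1) = (\<lambda>q. xy_monomial (c * real k0 * real l1) (k0 - 1) k1 l0 (l1 - 1) q
       - xy_monomial (c * real k1 * real l0) k0 (k1 - 1) (l0 - 1) l1 q)"
  unfolding Omega_def pd_xy_monomial by (simp add: algebra_simps)

definition falling_prod :: "nat \<Rightarrow> nat \<Rightarrow> nat \<Rightarrow> real" where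
  "falling_prod m e i = (\<Prod>k<i. real (m - k) * real (e - k))"

text \<open>The result of applying \<open>(\<partial>x\<^sub>0 \<partial>y\<^sub>1)^i (\<partial>x\<^sub>1 \<partial>y\<^sub>0)^j\<close> to
  \<open>x\<^sub>0^m x\<^sub>1^e y\<^sub>0^m y\<^sub>1^e\<close>.\<close>
definition mixed_derivative :: "nat \<Rightarrow> nat \<Rightarrow> nat \<Rightarrow> nat \<Rightarrow> pfun" where
  "mixed_derivative m e i j =
     xy_monomial (falling_prod m e i * falling_prod m e j) (m - i) (e - j) (m - j) (e - i)"

lemma mixed_derivative_polyfun [simp]: "mixed_derivative m e i j \<in> polyfun"
  unfolding mixed_derivative_def by simp

lemma Omega_mixed_derivative:
  "Omega (mixed_derivative m e i j) = (\<lambda>q. mixed_derivative m e (Suc i) j q - mixed_derivative m e i (Suc j) q)"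
proof -
  have Suc: "falling_prod m e (Suc k) = falling_prod m e k * (real (m - k) * real (e - k))" for k
    by (simp add: falling_prod_def)
  have "mixed_derivative m e (Suc i) j = xy_monomial
      (falling_prod m e i * falling_prod m e j * real (m - i) * real (e - i)) (m - i - 1) (e - j) (m - j) (e - i - 1)"
    "mixed_derivative m e i (Suc j) = xy_monomial
      (falling_prod m e i * falling_prod m e j * real (e - j) * real (m - j)) (m - i) (e - j - 1) (m - j - 1) (e - i)"
    unfolding mixed_derivative_def Suc by (simp_all add: mult_ac)
  then show ?thesis
    unfolding mixed_derivative_def Omega_xy_monomial by (simp add: mult_ac)
qed

lemma alternating_binomial_sum_Suc:
  fixes t :: "nat \<Rightarrow> nat \<Rightarrow> real"
  shows "(\<Sum>i\<le>n. real (n choose i) * (-1)^(n-i) * (t (Suc i) (n-i) - t i (Suc (n-i))))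
       = (\<Sum>i\<le>Suc n. real (Suc n choose i) * (-1)^(Suc n - i) * t i (Suc n - i))"
proof -
  define f where "f i = (-1::real)^(Suc n - i) * t i (Suc n - i)" for i
  have "(\<Sum>i\<le>Suc n. real (Suc n choose i) * (-1)^(Suc n - i) * t i (Suc n - i))
      = f 0 + (\<Sum>i\<le>n. real (n choose i) * f (Suc i)) + (\<Sum>i\<le>n. real (n choose Suc i) * f (Suc i))"
    unfolding sum.atMost_Suc_shift f_def by (simp add: sum.distrib distrib_right mult.assoc)
  moreover have "(\<Sum>i\<le>n. real (n choose i) * f i) = f 0 + (\<Sum>i\<le>n. real (n choose Suc i) * f (Suc i))"
    using sum.atMost_Suc_shift[of "\<lambda>i. real (n choose i) * f i" n] by (simp add: binomial_eq_0)
  moreover have "(\<Sum>i\<le>n. real (n choose i) * f (Suc i)) = (\<Sum>i\<le>n. real (n choose i) * (-1)^(n-i) * t (Suc i) (n-i))"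
    unfolding f_def by (simp add: mult.assoc)
  moreover have "(\<Sum>i\<le>n. real (n choose i) * f i) = - (\<Sum>i\<le>n. real (n choose i) * (-1)^(n-i) * t i (Suc (n-i)))"
    unfolding f_def sum_negf[symmetric] by (rule sum.cong) (auto simp: Suc_diff_le)
  ultimately show ?thesis
    by (simp add: sum_subtractf right_diff_distrib)
qed

lemma Omega_power_mixed_derivative:
  "(Omega ^^ n) (mixed_derivative m e 0 0) =
     (\<lambda>q. \<Sum>i\<le>n. real (n choose i) * (-1)^(n-i) * mixed_derivative m e i (n - i) q)"
proof (induction n)
  case 0
  then show ?case by simp
next
  case (Suc n)
  have "(Omega ^^ Suc n) (mixed_derivative m e 0 0) =
      Omega (\<lambda>q. \<Sum>i\<le>n. (real (n choose i) * (-1)^(n-i)) * mixed_derivative m e i (n - i) q)"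
    using Suc by (simp add: mult.assoc)
  also have "\<dots> = (\<lambda>q. \<Sum>i\<le>n. (real (n choose i) * (-1)^(n-i)) * Omega (mixed_derivative m e i (n - i)) q)"
    by (rule Omega_sum) simp
  also have "\<dots> = (\<lambda>q. \<Sum>i\<le>n. real (n choose i) * (-1)^(n-i) *
      (mixed_derivative m e (Suc i) (n - i) q - mixed_derivative m e i (Suc (n - i)) q))"
    by (simp add: Omega_mixed_derivative mult.assoc)
  also have "\<dots> = (\<lambda>q. \<Sum>i\<le>Suc n. real (Suc n choose i) * (-1)^(Suc n-i) * mixed_derivative m e i (Suc n - i) q)"
    by (rule ext, rule alternating_binomial_sum_Suc)
  finally show ?case .
qed

lemma linear_forms_polyfun [simp]: "a_x \<in> polyfun" "a_y \<in> polyfun" "b_x \<in> polyfun" "b_y \<in> polyfun"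
  unfolding a_x_def a_y_def b_x_def b_y_def by simp_all

text \<open>The factor \<open>1\<close> puts these in the shape required by \<open>euler_xy_power\<close>.\<close>
lemma euler_xy_linear_forms:
  "euler_xy a_x = (\<lambda>q. 1 * a_x q)" "euler_xy a_y = (\<lambda>q. 1 * a_y q)"
  "euler_xy b_x = (\<lambda>q. 1 * b_x q)" "euler_xy b_y = (\<lambda>q. 1 * b_y q)"
  unfolding euler_xy_def a_x_def a_y_def b_x_def b_y_def by (simp_all add: pd_add pd_mult algebra_simps)

definition ab_form :: "nat \<Rightarrow> nat \<Rightarrow> pfun" where
  "ab_form m e = (\<lambda>q. a_x q ^ m * a_y q ^ m * b_x q ^ e * b_y q ^ e)"

lemma ab_form_polyfun [simp]: "ab_form m e \<in> polyfun"
  unfolding ab_form_def by simp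

lemma euler_xy_ab_form: "euler_xy (ab_form m e) = (\<lambda>q. (2 * real m + 2 * real e) * ab_form m e q)"
proof -
  note powers = euler_xy_power[OF linear_forms_polyfun(1) euler_xy_linear_forms(1)]
    euler_xy_power[OF linear_forms_polyfun(2) euler_xy_linear_forms(2)]
    euler_xy_power[OF linear_forms_polyfun(3) euler_xy_linear_forms(3)]
    euler_xy_power[OF linear_forms_polyfun(4) euler_xy_linear_forms(4)]
  show ?thesis
    unfolding ab_form_def by (simp add: euler_xy_mult powers del: power_Suc) (rule ext, simp add: algebra_simps)
qed

lemma Fpoly_eq: "Fpoly r e p = (\<lambda>q. bracket_xy q ^ (2 * p) * ab_form (r * e - 2 * p) e q)"
  unfolding Fpoly_def ab_form_def by (simp add: mult_ac)

lemma Omega_power_Fpoly_nonzero_on_diagonal: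
  assumes "2 * p \<le> r * e" "p \<le> p'" "2 * (p' - p) \<le> r * e - 2 * p + e"
    and "diagonal q" "(Omega ^^ (2 * (p' - p))) (ab_form (r * e - 2 * p) e) q \<noteq> 0"
  shows "(Omega ^^ (2 * p')) (Fpoly r e p) q \<noteq> 0"
proof -
  have "2 * (2 * p' - 2 * p) \<le> 2 * (r * e - 2 * p) + 2 * e"
    using assms by linarith
  then have degree: "2 * real (2 * p' - 2 * p) \<le> 2 * real (r * e - 2 * p) + 2 * real e"
    using of_nat_le_iff[of "2 * (2 * p' - 2 * p)" "2 * (r * e - 2 * p) + 2 * e", where 'a = real] by simp
  have "2 * p \<le> 2 * p'" using assms(2) by simp
  from Omega_power_bracket_xy_power_on_diagonal[OF ab_form_polyfun euler_xy_ab_form this degree]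
  obtain c where "c > 0" and "\<forall>q. diagonal q \<longrightarrow> (Omega ^^ (2 * p')) (Fpoly r e p) q =
      c * (Omega ^^ (2 * (p' - p))) (ab_form (r * e - 2 * p) e) q"
    unfolding Fpoly_eq diff_mult_distrib2 by blast
  with assms(4,5) show ?thesis by simp
qed

lemma Omega_power_ab_form_nonzero:
  assumes "e \<le> m"
  shows "\<exists>q. diagonal q \<and> (Omega ^^ (2 * e)) (ab_form m e) q \<noteq> 0"
proof -
  define S where "S = {q :: var \<Rightarrow> real. q A0 = 1 \<and> q A1 = 0 \<and> q B0 = 0 \<and> q B1 = 1}"
  define q0 :: "var \<Rightarrow> real" where "q0 v = (if v = A1 \<or> v = B0 then 0 else 1)" for v
  txt \<open>On \<open>S\<close> we have \<open>a = (1,0)\<close> and \<open>b = (0,1)\<close>, so the form becomes a monomial in \<open>x, y\<close>.\<close>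
  have "q0 \<in> S" "diagonal q0" unfolding S_def q0_def diagonal_def by simp_all
  have "(Omega ^^ (2 * e)) (ab_form m e) q0 = (Omega ^^ (2 * e)) (mixed_derivative m e 0 0) q0"
    by (rule Omega_power_cong_on[OF _ _ \<open>q0 \<in> S\<close>])
       (auto simp: S_def ab_form_def mixed_derivative_def xy_monomial_def falling_prod_def
          a_x_def a_y_def b_x_def b_y_def)
  also have "\<dots> = (\<Sum>i\<le>2 * e. real (2 * e choose i) * (-1)^(2 * e - i) *
                       (falling_prod m e i * falling_prod m e (2 * e - i)))"
    unfolding Omega_power_mixed_derivative by (simp add: mixed_derivative_def xy_monomial_def q0_def)
  also have "\<dots> = real (2 * e choose e) * (-1)^e * (falling_prod m e e * falling_prod m e e)"
  proof -
    have vanish: "falling_prod m e i = 0" if "e < i" for i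
      unfolding falling_prod_def using that by (intro prod_zero) (auto intro: bexI[of _ e])
    have "(\<Sum>i\<in>{..2 * e} - {e}. real (2 * e choose i) * (-1)^(2 * e - i) *
             (falling_prod m e i * falling_prod m e (2 * e - i))) = 0"
    proof (intro sum.neutral ballI)
      fix i assume "i \<in> {..2 * e} - {e}"
      then have "e < i \<or> e < 2 * e - i" by auto
      then show "real (2 * e choose i) * (-1)^(2 * e - i) * (falling_prod m e i * falling_prod m e (2 * e - i)) = 0"
        using vanish by auto
    qed
    then show ?thesis by (simp add: sum.remove[of "{..2 * e}" e])
  qed
  also have "\<dots> \<noteq> 0"
    using assms unfolding falling_prod_def by (simp add: prod_zero_iff)
  finally show ?thesis using \<open>diagonal q0\<close> by blast
qed

theorem mainTheorem9:
  fixes r e p' :: nat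
  assumes "r \<ge> 2" and "e \<ge> 1" and "2 * p' \<le> (r + 1) * e"
  shows "\<exists>p::nat. 2 * p \<le> r * e \<and>
           (\<exists>q. q Y0 = q X0 \<and> q Y1 = q X1 \<and> (Omega ^^ (2 * p')) (Fpoly r e p) q \<noteq> 0)"
proof (cases "2 * p' \<le> r * e")
  case True
  define q1 :: "var \<Rightarrow> real" where "q1 = (\<lambda>_. 1)"
  have "diagonal q1" "ab_form (r * e - 2 * p') e q1 \<noteq> 0"
    unfolding diagonal_def q1_def ab_form_def a_x_def a_y_def b_x_def b_y_def by simp_all
  then have "(Omega ^^ (2 * p')) (Fpoly r e p') q1 \<noteq> 0"
    using Omega_power_Fpoly_nonzero_on_diagonal[of p' r e p'] True by simp
  with True \<open>diagonal q1\<close> show ?thesis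
    unfolding diagonal_def by blast
next
  case False
  define p where "p = p' - e"
  have "2 * e \<le> r * e" using assms(1) by simp
  with False have "e \<le> p'" by linarith
  then have p: "2 * p \<le> r * e" "p \<le> p'" "p' - p = e" and m: "e \<le> r * e - 2 * p"
    using assms(3) False unfolding p_def by (simp_all add: algebra_simps)
  obtain q where "diagonal q" "(Omega ^^ (2 * e)) (ab_form (r * e - 2 * p) e) q \<noteq> 0"
    using Omega_power_ab_form_nonzero[OF m] by blast
  then have "(Omega ^^ (2 * p')) (Fpoly r e p) q \<noteq> 0"
    using Omega_power_Fpoly_nonzero_on_diagonal[OF p(1,2)] m unfolding p(3) by simp
  with p(1) \<open>diagonal q\<close> show ?thesis
    unfolding diagonal_def by blast
qed

end
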